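(* Let $n$ be even and let $j$ be a positive integer with $\eta := j/n \leq 1/10$. Let $H = J(n,n/2,j)$, let $A$ be its adjacency matrix, let $d = {n/2 \choose j}^2$ (the degree of the regular graph $H$), and let $\tilde{L} = I - A/d$ be the normalised Laplacian of $H$, where $I$ is the ${n \choose n/2}\times{n \choose n/2}$ identity matrix. Let $\tilde{\mu}_1 \leq \tilde{\mu}_2 \leq \dots \leq \tilde{\mu}_{{n \choose n/2}}$ be the eigenvalues of $\tilde{L}$ in increasing order, counted with multiplicity (so $\tilde{\mu}_1 = 0$). Then $$\tilde{\mu}_2 \geq \eta/2.$$
   Context: For $1 \leq j \leq k \leq n$, the Johnson graph $J(n,k,j)$ has vertex set ${[n] \choose k}$ (the $k$-element subsets of $[n]=\{1,\dots,n\}$), with two $k$-sets joined by an edge iff their symmetric difference has size $2j$. *)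

theory Defs
  imports "Jordan_Normal_Form.Char_Poly" "HOL-Library.Multiset"
begin

definition johnson_vertices :: "nat \<Rightarrow> nat \<Rightarrow> nat set set" where
  "johnson_vertices n k = {S. S \<subseteq> {1..n} \<and> card S = k}"

definition johnson_adj :: "nat \<Rightarrow> nat set \<Rightarrow> nat set \<Rightarrow> bool" where
  "johnson_adj j S T \<longleftrightarrow> card ((S - T) \<union> (T - S)) = 2 * j"

text \<open>Adjacency matrix of J(n,k,j) with respect to an enumeration e of the vertices
  by the indices 0..<card(vertices).\<close>
definition johnson_adj_mat :: "nat \<Rightarrow> nat \<Rightarrow> nat \<Rightarrow> (nat \<Rightarrow> nat set) \<Rightarrow> real mat" where
  "johnson_adj_mat n k j e =
     mat (card (johnson_vertices n k)) (card (johnson_vertices n k))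
       (\<lambda>(a, b). if johnson_adj j (e a) (e b) then 1 else 0)"

text \<open>es is the list of eigenvalues of A counted with multiplicity, i.e. the characteristic
  polynomial of A splits over the reals as the product of (x - a) for a in es.\<close>
definition eigenvalue_list :: "real mat \<Rightarrow> real list \<Rightarrow> bool" where
  "eigenvalue_list A es \<longleftrightarrow> char_poly A = prod_list (map (\<lambda>a. [:- a, 1:]) es)"

end

theory Submission
  imports Defs "Jordan_Normal_Form.Schur_Decomposition"
begin

text \<open>
  Since \<open>L\<close> is real symmetric, its characteristic polynomial splits over the reals. A Schur
  triangularisation \<open>L = P B P\<^sup>-\<^sup>1\<close> with the sorted eigenvalues \<open>\<mu>\<^sub>1 \<le> \<mu>\<^sub>2 \<le> \<dots>\<close> on the
  diagonal of \<open>B\<close> gives \<open>L p\<^sub>1 = \<mu>\<^sub>1 p\<^sub>1\<close> and \<open>L p\<^sub>2 = \<mu>\<^sub>2 p\<^sub>2 + B\<^sub>1\<^sub>2 p\<^sub>1\<close> for the first two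
  columns of \<open>P\<close>. So it suffices that every vector \<open>p\<close> for which \<open>L p - \<mu> p\<close> is constant, with
  \<open>\<mu> < \<eta>/2\<close>, is itself constant: otherwise \<open>\<mu>\<^sub>2 < \<eta>/2\<close> makes \<open>p\<^sub>1\<close> and then \<open>p\<^sub>2\<close> constant,
  contradicting the invertibility of \<open>P\<close>.

  Read \<open>p\<close> as a function \<open>f\<close> on the vertices with \<open>\<Sum>\<^sub>T\<^sub>~\<^sub>S f T = \<lambda> f S + c\<close>, where
  \<open>\<lambda> = d (1 - \<mu>)\<close>. Let \<open>M\<close> be the largest \<open>\<bar>f X - f Y\<bar>\<close> over pairs where \<open>Y\<close> arises from \<open>X\<close>
  by exchanging one element, attained at \<open>X\<close> and \<open>Y = (a b) X\<close>. The transposition \<open>(a b)\<close> maps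
  the neighbours of \<open>X\<close> onto those of \<open>Y\<close> and moves only the neighbours containing exactly one
  of \<open>a\<close> and \<open>b\<close>, each by an exchange. With \<open>k = n/2\<close> there are at most
  \<open>C(k-1,j)\<^sup>2 + C(k-1,j-1)\<^sup>2 \<le> (1 - \<eta>/2) d < \<lambda>\<close> of them, so \<open>\<lambda> M \<le> (1 - \<eta>/2) d M\<close> forces
  \<open>M = 0\<close>; since exchanges connect all vertices, \<open>f\<close> is constant.
\<close>

section \<open>Real symmetric matrices and their second eigenvalue\<close>

lemma real_symmetric_mat_eigenvalue_real:
  fixes A :: "real mat"
  assumes A: "A \<in> carrier_mat n n" and sym: "transpose_mat A = A"
    and ev: "eigenvalue (map_mat complex_of_real A) a"
  shows "Im a = 0"
proof -
  let ?Ac = "map_mat complex_of_real A"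
  obtain v where v: "v \<in> carrier_vec n" "v \<noteq> 0\<^sub>v n" "?Ac *\<^sub>v v = a \<cdot>\<^sub>v v"
    using ev A unfolding eigenvalue_def eigenvector_def by auto
  have A_sym: "A $$ (i, l) = A $$ (l, i)" if "i < n" "l < n" for i l
    using A that arg_cong[OF sym, of "\<lambda>B. B $$ (l, i)"] by simp
  define s where "s = (\<Sum>i<n. cnj (v $ i) * (?Ac *\<^sub>v v) $ i)"
  define W where "W = (\<Sum>i<n. (cmod (v $ i))\<^sup>2)"
  have s_eigen: "s = a * complex_of_real W"
  proof -
    have "s = (\<Sum>i<n. a * (cnj (v $ i) * v $ i))"
      unfolding s_def v(3) using v(1) by (intro sum.cong) auto
    then show ?thesis
      unfolding W_def complex_norm_square of_real_sum by (simp add: sum_distrib_left mult.commute)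
  qed
  have s_entries: "s = (\<Sum>i<n. \<Sum>l<n. cnj (v $ i) * complex_of_real (A $$ (i, l)) * v $ l)"
    unfolding s_def using A carrier_vecD[OF v(1)]
    by (intro sum.cong)
      (auto simp: scalar_prod_def row_def sum_distrib_left mult.assoc atLeast0LessThan)
  have "cnj s = (\<Sum>i<n. \<Sum>l<n. v $ i * complex_of_real (A $$ (i, l)) * cnj (v $ l))"
    unfolding s_entries by simp
  also have "\<dots> = (\<Sum>l<n. \<Sum>i<n. v $ i * complex_of_real (A $$ (i, l)) * cnj (v $ l))"
    by (rule sum.swap)
  also have "\<dots> = s"
    unfolding s_entries using A_sym by (intro sum.cong) (auto simp: mult.commute mult.left_commute)
  finally have "cnj s = s" .
  moreover have "W > 0"
  proof -
    have "\<exists>i<n. v $ i \<noteq> 0"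
    proof (rule ccontr)
      assume "\<not> (\<exists>i<n. v $ i \<noteq> 0)"
      then have "v = 0\<^sub>v n" using v(1) by (intro eq_vecI) auto
      with v(2) show False ..
    qed
    then obtain i where i: "i < n" "v $ i \<noteq> 0" by blast
    have "(cmod (v $ i))\<^sup>2 \<le> W" unfolding W_def using i by (intro member_le_sum) auto
    moreover have "(cmod (v $ i))\<^sup>2 > 0" using i by simp
    ultimately show ?thesis by linarith
  qed
  ultimately have "cnj a = a" using s_eigen by simp
  then have "Im (cnj a) = Im a" by simp
  then show ?thesis by simp
qed

lemma char_poly_real_symmetric_mat_splits:
  fixes A :: "real mat"
  assumes A: "A \<in> carrier_mat n n" and sym: "transpose_mat A = A"
  shows "\<exists>es. char_poly A = (\<Prod>a\<leftarrow>es. [:- a, 1:])"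
proof -
  let ?Ac = "map_mat complex_of_real A"
  have Ac: "?Ac \<in> carrier_mat n n" using A by simp
  obtain as where cp: "char_poly ?Ac = (\<Prod>a\<leftarrow>as. [:- a, 1:])"
    using char_poly_factorized[OF Ac] by blast
  have "Im a = 0" if "a \<in> set as" for a
  proof -
    have "poly (char_poly ?Ac) a = 0"
      unfolding cp poly_prod_list using that by (auto simp: prod_list_zero_iff)
    then show ?thesis
      using eigenvalue_root_char_poly[OF Ac] real_symmetric_mat_eigenvalue_real[OF A sym] by simp
  qed
  then have as: "as = map (complex_of_real \<circ> Re) as"
    by (induction as) (auto simp: complex_eq_iff)
  interpret of_real_poly: map_poly_inj_idom_hom "of_real :: real \<Rightarrow> complex" ..
  have "map_poly complex_of_real (char_poly A) = char_poly ?Ac"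
    by (rule of_real_hom.char_poly_hom[OF A, symmetric])
  also have "\<dots> = map_poly complex_of_real (\<Prod>a\<leftarrow>map Re as. [:- a, 1:])"
    by (subst cp, subst as) (simp add: of_real_poly.hom_prod_list o_def)
  finally show ?thesis by (blast dest: of_real_poly.injectivity)
qed

lemma index_one_minus_smult_mult_vec:
  fixes A :: "'a :: comm_ring_1 mat"
  assumes "A \<in> carrier_mat N N" "p \<in> carrier_vec N" "i < N"
  shows "((1\<^sub>m N - s \<cdot>\<^sub>m A) *\<^sub>v p) $ i = p $ i - s * (A *\<^sub>v p) $ i"
proof -
  have "((1\<^sub>m N - s \<cdot>\<^sub>m A) *\<^sub>v p) $ i
      = (\<Sum>l\<in>{0..<N}. (if i = l then p $ l else 0) - s * (A $$ (i, l) * p $ l))"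
    using assms by (auto simp: scalar_prod_def algebra_simps intro: sum.cong)
  also have "\<dots> = p $ i - s * (A *\<^sub>v p) $ i"
    using assms by (simp add: sum_subtractf sum_distrib_left scalar_prod_def)
  finally show ?thesis .
qed

lemma transpose_one_minus_smult_mat:
  assumes "A \<in> carrier_mat N N" "transpose_mat A = A"
  shows "transpose_mat (1\<^sub>m N - s \<cdot>\<^sub>m A) = 1\<^sub>m N - s \<cdot>\<^sub>m A"
proof -
  have "A $$ (l, i) = A $$ (i, l)" if "i < N" "l < N" for i l
    using assms that index_transpose_mat(1)[of i A l] by simp
  then show ?thesis using assms(1) by (intro eq_matI) auto
qed

lemma index_mult_upper_triangular:
  assumes P: "P \<in> carrier_mat N N" and B: "B \<in> carrier_mat N N" "upper_triangular B"
    and i: "i < N" and c: "c < N"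
  shows "(P * B) $$ (i, c) = (\<Sum>m\<le>c. P $$ (i, m) * B $$ (m, c))"
proof -
  have "(P * B) $$ (i, c) = (\<Sum>m\<in>{0..<N}. P $$ (i, m) * B $$ (m, c))"
    using P B i c by (simp add: scalar_prod_def)
  also have "\<dots> = (\<Sum>m\<le>c. P $$ (i, m) * B $$ (m, c))"
    using B i c by (intro sum.mono_neutral_right) (auto simp: upper_triangularD not_le)
  finally show ?thesis .
qed

lemma left_invertible_mat_const_columns:
  fixes P Q :: "'a :: field mat"
  assumes P: "P \<in> carrier_mat N N" and Q: "Q \<in> carrier_mat N N" and QP: "Q * P = 1\<^sub>m N"
    and N: "2 \<le> N" and const0: "\<forall>i<N. P $$ (i, 0) = P $$ (0, 0)"
  shows "\<exists>i<N. P $$ (i, 1) \<noteq> P $$ (0, 1)"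
proof (rule ccontr)
  assume "\<not> ?thesis"
  then have const1: "\<forall>i<N. P $$ (i, 1) = P $$ (0, 1)" by blast
  have row_sum: "(Q * P) $$ (r, c) = P $$ (0, c) * (\<Sum>m\<in>{0..<N}. Q $$ (r, m))"
    if "r < N" "c < N" and const: "\<forall>i<N. P $$ (i, c) = P $$ (0, c)" for r c
  proof -
    have "(Q * P) $$ (r, c) = (\<Sum>m\<in>{0..<N}. Q $$ (r, m) * P $$ (m, c))"
      using P Q that(1,2) by (simp add: scalar_prod_def)
    also have "\<dots> = (\<Sum>m\<in>{0..<N}. Q $$ (r, m) * P $$ (0, c))"
    proof (rule sum.cong)
      fix m assume "m \<in> {0..<N}"
      then have "m < N" by simp
      with const have "P $$ (m, c) = P $$ (0, c)" by blast
      then show "Q $$ (r, m) * P $$ (m, c) = Q $$ (r, m) * P $$ (0, c)" by simp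
    qed simp
    finally show ?thesis by (simp add: sum_distrib_left mult.commute)
  qed
  have "P $$ (0, 1) * (\<Sum>m\<in>{0..<N}. Q $$ (1, m)) = 1"
    using row_sum[OF _ _ const1, of 1] QP N by simp
  moreover have "P $$ (0, 1) * (\<Sum>m\<in>{0..<N}. Q $$ (0, m)) = 0"
    using row_sum[OF _ _ const1, of 0] QP N by simp
  ultimately have "(\<Sum>m\<in>{0..<N}. Q $$ (0, m)) = 0" by auto
  moreover have "P $$ (0, 0) * (\<Sum>m\<in>{0..<N}. Q $$ (0, m)) = 1"
    using row_sum[OF _ _ const0, of 0] QP N by simp
  ultimately show False by simp
qed

lemma schur_first_two_columns:
  fixes A :: "real mat"
  assumes A: "A \<in> carrier_mat N N" and N: "2 \<le> N"
    and cp: "char_poly A = (\<Prod>a\<leftarrow>es. [:- a, 1:])"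
  obtains P Q b where "P \<in> carrier_mat N N" "Q \<in> carrier_mat N N" "Q * P = 1\<^sub>m N"
    and "\<forall>i<N. (A *\<^sub>v col P 0) $ i = es ! 0 * col P 0 $ i"
    and "\<forall>i<N. (A *\<^sub>v col P 1) $ i = es ! 1 * col P 1 $ i + b * P $$ (i, 0)"
proof -
  obtain B P Q where "schur_decomposition A es = (B, P, Q)"
    by (cases "schur_decomposition A es") auto
  from schur_decomposition[OF A cp this]
  have sim: "similar_mat_wit A B P Q" and B_ut: "upper_triangular B" and diag: "diag_mat B = es"
    by auto
  have B: "B \<in> carrier_mat N N" and P: "P \<in> carrier_mat N N" and Q: "Q \<in> carrier_mat N N"
    and QP: "Q * P = 1\<^sub>m N" and A_eq: "A = P * B * Q"
    using sim A unfolding similar_mat_wit_def Let_def by auto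
  have "A * P = P * B * (Q * P)"
    unfolding A_eq using P B Q by (simp add: assoc_mult_mat[of _ N N _ N _ N])
  then have AP: "A * P = P * B" using P B QP by simp
  have B_diag: "B $$ (c, c) = es ! c" if "c < N" for c
    using diag B that by (auto simp: diag_mat_def)
  have col: "(A *\<^sub>v col P c) $ i = (\<Sum>m\<le>c. P $$ (i, m) * B $$ (m, c))"
    if "i < N" "c < N" for i c
  proof -
    have "(A *\<^sub>v col P c) $ i = (A * P) $$ (i, c)" using A P that by simp
    then show ?thesis unfolding AP using index_mult_upper_triangular[OF P B B_ut that] by simp
  qed
  show thesis
  proof (rule that[OF P Q QP, of "B $$ (0, 1)"])
    show "\<forall>i<N. (A *\<^sub>v col P 0) $ i = es ! 0 * col P 0 $ i"
      using col B_diag N P by simp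
    show "\<forall>i<N. (A *\<^sub>v col P 1) $ i = es ! 1 * col P 1 $ i + B $$ (0, 1) * P $$ (i, 0)"
      using col B_diag N P by (simp add: numeral_eq_Suc atMost_Suc)
  qed
qed

lemma second_smallest_eigenvalue_ge:
  fixes A :: "real mat"
  assumes A: "A \<in> carrier_mat N N" and N: "2 \<le> N"
    and cp: "char_poly A = (\<Prod>a\<leftarrow>es. [:- a, 1:])"
    and const: "\<And>p mu c. p \<in> carrier_vec N \<Longrightarrow> mu < t \<Longrightarrow>
      \<forall>i<N. (A *\<^sub>v p) $ i = mu * p $ i + c \<Longrightarrow> \<forall>i<N. p $ i = p $ 0"
  shows "t \<le> sort es ! 1"
proof (rule ccontr)
  assume neg: "\<not> t \<le> sort es ! 1"
  have cp_sorted: "char_poly A = (\<Prod>a\<leftarrow>sort es. [:- a, 1:])"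
    unfolding cp by (simp only: prod_mset_prod_list[symmetric] mset_map mset_sort)
  have "length (sort es) = N"
    using degree_monic_char_poly[OF A] degree_linear_factors[of uminus "sort es"] cp_sorted by simp
  then have small: "sort es ! 0 < t" "sort es ! 1 < t"
    using neg N sorted_nth_mono[of "sort es" 0 1] by auto
  obtain P Q b where P: "P \<in> carrier_mat N N" and Q: "Q \<in> carrier_mat N N" and QP: "Q * P = 1\<^sub>m N"
    and col0: "\<forall>i<N. (A *\<^sub>v col P 0) $ i = sort es ! 0 * col P 0 $ i"
    and col1: "\<forall>i<N. (A *\<^sub>v col P 1) $ i = sort es ! 1 * col P 1 $ i + b * P $$ (i, 0)"
    using schur_first_two_columns[OF A N cp_sorted] by blast
  have col_const: "\<forall>i<N. P $$ (i, c) = P $$ (0, c)"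
    if eigen: "\<forall>i<N. (A *\<^sub>v col P c) $ i = mu * col P c $ i + r" and mu: "mu < t" and c: "c < N"
    for c mu r
  proof (intro allI impI)
    fix i assume i: "i < N"
    have "col P c \<in> carrier_vec N" using col_dim[of P c] P by simp
    with const mu eigen i have "col P c $ i = col P c $ 0" by blast
    then show "P $$ (i, c) = P $$ (0, c)" using P N i c by simp
  qed
  have col0_const: "\<forall>i<N. P $$ (i, 0) = P $$ (0, 0)"
    by (rule col_const[OF _ small(1), of 0 0]) (use col0 N in simp_all)
  have "\<forall>i<N. (A *\<^sub>v col P 1) $ i = sort es ! 1 * col P 1 $ i + b * P $$ (0, 0)"
  proof (intro allI impI)
    fix i assume i: "i < N"
    with col0_const have "P $$ (i, 0) = P $$ (0, 0)" by blast
    with col1 i show "(A *\<^sub>v col P 1) $ i = sort es ! 1 * col P 1 $ i + b * P $$ (0, 0)" by simp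
  qed
  moreover have "1 < N" using N by simp
  ultimately have "\<forall>i<N. P $$ (i, 1) = P $$ (0, 1)" by (rule col_const[OF _ small(2)])
  then show False using left_invertible_mat_const_columns[OF P Q QP N col0_const] by blast
qed

section \<open>Exchanges in Johnson graphs\<close>

lemma finite_johnson_vertices: "finite (johnson_vertices n k)"
  unfolding johnson_vertices_def by (rule finite_subset[of _ "Pow {1..n}"]) auto

lemma card_johnson_vertices: "card (johnson_vertices n k) = n choose k"
  using n_subsets[of "{1..n}" k] by (simp add: johnson_vertices_def)

lemma johnson_verticesD:
  assumes "X \<in> johnson_vertices n k"
  shows "X \<subseteq> {1..n}" "card X = k" "finite X"
  using assms finite_subset[of X "{1..n}"] by (auto simp: johnson_vertices_def)

lemma card_Diff_commute:
  assumes "finite X" "finite Y" "card X = card Y"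
  shows "card (X - Y) = card (Y - X)"
  using assms by (metis Int_commute card_Diff_subset_Int finite_Int)

lemma johnson_adj_commute: "johnson_adj j S T = johnson_adj j T S"
  unfolding johnson_adj_def by (simp add: Un_commute)

lemma johnson_adj_card_Diff:
  assumes "S \<in> johnson_vertices n k" "T \<in> johnson_vertices n k" "johnson_adj j S T"
  shows "card (S - T) = j" "card (T - S) = j"
proof -
  note S = johnson_verticesD[OF assms(1)] and T = johnson_verticesD[OF assms(2)]
  have "card (S - T) = card (T - S)" using S T by (intro card_Diff_commute) auto
  moreover have "card ((S - T) \<union> (T - S)) = card (S - T) + card (T - S)"
    using S T by (intro card_Un_disjoint) auto
  ultimately show "card (S - T) = j" "card (T - S) = j"
    using assms(3) unfolding johnson_adj_def by simp_all
qed

definition exchange :: "'a set \<Rightarrow> 'a set \<Rightarrow> bool" where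
  "exchange X Y \<longleftrightarrow> (\<exists>a b. a \<in> X \<and> b \<notin> X \<and> Y = insert b (X - {a}))"

lemma johnson_vertices_exchange_connected:
  assumes f: "\<And>X Y. X \<in> johnson_vertices n k \<Longrightarrow> Y \<in> johnson_vertices n k \<Longrightarrow> exchange X Y
      \<Longrightarrow> f X = f Y"
    and X: "X \<in> johnson_vertices n k" and Y: "Y \<in> johnson_vertices n k"
  shows "f X = f Y"
  using X
proof (induction "card (X - Y)" arbitrary: X)
  case 0
  note X = johnson_verticesD[OF 0(2)] and Y = johnson_verticesD[OF Y]
  have "X \<subseteq> Y" using 0 X by auto
  then have "X = Y" using X Y by (simp add: card_subset_eq)
  then show ?case by simp
next
  case (Suc m)
  note X = johnson_verticesD[OF Suc(3)] and Y = johnson_verticesD[OF Y]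
  obtain a where a: "a \<in> X - Y" using Suc(2) by (metis card.empty ex_in_conv nat.distinct(1))
  have "card (Y - X) = Suc m" using Suc(2) X Y card_Diff_commute[of X Y] by simp
  then obtain b where b: "b \<in> Y - X" by (metis card.empty ex_in_conv nat.distinct(1))
  define X' where "X' = insert b (X - {a})"
  have "X' \<subseteq> {1..n}" using X Y b by (auto simp: X'_def)
  moreover have "card X' = k"
    using X a b card_Suc_Diff1[of X a] by (simp add: X'_def)
  ultimately have X': "X' \<in> johnson_vertices n k" by (simp add: johnson_vertices_def)
  have "X' - Y = X - Y - {a}" using a b by (auto simp: X'_def)
  then have "m = card (X' - Y)" using Suc(2) a X by simp
  then have "f X' = f Y" by (rule Suc.hyps(1)[OF _ X'])
  moreover have "exchange X X'" unfolding exchange_def X'_def using a b by blast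
  ultimately show ?case using f[OF Suc(3) X'] by simp
qed

lemma transpose_image_insert_Diff:
  assumes "a \<in> X" "b \<notin> X"
  shows "transpose a b ` X = insert b (X - {a})"
proof -
  have "transpose a b ` X = transpose a b ` insert a (X - {a})"
    by (simp only: insert_Diff[OF assms(1)])
  also have "\<dots> = insert b (transpose a b ` (X - {a}))"
    by (simp only: image_insert transpose_apply_first)
  also have "transpose a b ` (X - {a}) = X - {a}"
    using assms by (intro transpose_image_eq) auto
  finally show ?thesis .
qed

lemma exchange_transpose_image:
  assumes "a \<in> X \<longleftrightarrow> b \<notin> X"
  shows "exchange X (transpose a b ` X)"
proof (cases "a \<in> X")
  case True
  with assms have "transpose a b ` X = insert b (X - {a})"
    by (simp add: transpose_image_insert_Diff)
  with True assms show ?thesis unfolding exchange_def by auto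
next
  case False
  with assms have "transpose a b ` X = insert a (X - {b})"
    using transpose_image_insert_Diff[of b X a] by (simp add: transpose_commute)
  with False assms show ?thesis unfolding exchange_def by auto
qed

lemma transpose_image_johnson_vertices:
  assumes "a \<in> {1..n}" "b \<in> {1..n}" "X \<in> johnson_vertices n k"
  shows "transpose a b ` X \<in> johnson_vertices n k"
proof -
  have "transpose a b ` X \<subseteq> {1..n}"
    using assms by (auto simp: johnson_vertices_def transpose_def)
  then show ?thesis
    using assms(3) by (simp add: johnson_vertices_def card_image)
qed

lemma johnson_adj_transpose_image:
  "johnson_adj j (transpose a b ` S) (transpose a b ` T) = johnson_adj j S T"
  unfolding johnson_adj_def
  by (simp add: image_set_diff[OF inj_transpose, symmetric] image_Un[symmetric] card_image)

definition johnson_nbrs :: "nat \<Rightarrow> nat \<Rightarrow> nat \<Rightarrow> nat set \<Rightarrow> nat set set" where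
  "johnson_nbrs n k j S = {T \<in> johnson_vertices n k. johnson_adj j S T}"

lemma finite_johnson_nbrs: "finite (johnson_nbrs n k j S)"
  unfolding johnson_nbrs_def using finite_johnson_vertices by simp

lemma transpose_image_involutory: "transpose a b ` transpose a b ` X = X"
  by (simp add: image_comp)

lemma transpose_image_johnson_nbrs:
  assumes "a \<in> {1..n}" "b \<in> {1..n}" "T \<in> johnson_nbrs n k j S"
  shows "transpose a b ` T \<in> johnson_nbrs n k j (transpose a b ` S)"
  using assms transpose_image_johnson_vertices[OF assms(1,2)]
  by (simp add: johnson_nbrs_def johnson_adj_transpose_image)

lemma bij_betw_transpose_image_johnson_nbrs:
  assumes "a \<in> {1..n}" "b \<in> {1..n}"
  shows "bij_betw (image (transpose a b))
    (johnson_nbrs n k j S) (johnson_nbrs n k j (transpose a b ` S))"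
proof (rule bij_betw_byWitness[where f' = "image (transpose a b)"])
  show "image (transpose a b) ` johnson_nbrs n k j S \<subseteq> johnson_nbrs n k j (transpose a b ` S)"
    using transpose_image_johnson_nbrs[OF assms] by blast
  show "image (transpose a b) ` johnson_nbrs n k j (transpose a b ` S) \<subseteq> johnson_nbrs n k j S"
    using transpose_image_johnson_nbrs[OF assms, of _ k j "transpose a b ` S"]
    unfolding transpose_image_involutory by blast
qed (simp_all only: transpose_image_involutory, blast+)

lemma sum_johnson_nbrs_transpose_diff_le:
  fixes f :: "nat set \<Rightarrow> real"
  assumes a: "a \<in> {1..n}" and b: "b \<in> {1..n}"
    and M: "\<And>X Y. X \<in> johnson_vertices n k \<Longrightarrow> Y \<in> johnson_vertices n k \<Longrightarrow> exchange X Y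
              \<Longrightarrow> \<bar>f X - f Y\<bar> \<le> M"
  shows "\<bar>sum f (johnson_nbrs n k j S) - sum f (johnson_nbrs n k j (transpose a b ` S))\<bar>
    \<le> M * card {T \<in> johnson_nbrs n k j S. a \<in> T \<longleftrightarrow> b \<notin> T}"
proof -
  let ?\<tau> = "image (transpose a b)"
  let ?E = "{T \<in> johnson_nbrs n k j S. a \<in> T \<longleftrightarrow> b \<notin> T}"
  have "sum f (johnson_nbrs n k j (?\<tau> S)) = (\<Sum>T\<in>johnson_nbrs n k j S. f (?\<tau> T))"
    by (rule sum.reindex_bij_betw[OF bij_betw_transpose_image_johnson_nbrs[OF a b], symmetric])
  then have "sum f (johnson_nbrs n k j S) - sum f (johnson_nbrs n k j (?\<tau> S))
      = (\<Sum>T\<in>johnson_nbrs n k j S. f T - f (?\<tau> T))"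
    by (simp add: sum_subtractf)
  also have "\<dots> = (\<Sum>T\<in>?E. f T - f (?\<tau> T))"
    by (rule sum.mono_neutral_right) (auto simp: finite_johnson_nbrs)
  finally have "\<bar>sum f (johnson_nbrs n k j S) - sum f (johnson_nbrs n k j (?\<tau> S))\<bar>
      = \<bar>\<Sum>T\<in>?E. f T - f (?\<tau> T)\<bar>" by simp
  also have "\<dots> \<le> (\<Sum>T\<in>?E. \<bar>f T - f (?\<tau> T)\<bar>)"
    by (rule sum_abs)
  also have "\<dots> \<le> (\<Sum>T\<in>?E. M)"
  proof (rule sum_mono)
    fix T assume T: "T \<in> ?E"
    then have "T \<in> johnson_vertices n k" by (simp add: johnson_nbrs_def)
    then show "\<bar>f T - f (?\<tau> T)\<bar> \<le> M"
      using T by (intro M transpose_image_johnson_vertices[OF a b] exchange_transpose_image) auto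
  qed
  finally show ?thesis by (simp add: mult.commute)
qed

lemma inj_on_Diff_pair:
  "inj_on (\<lambda>T. (S - T - A, T - S - B)) {T. A \<subseteq> S - T \<and> B \<subseteq> T - S}"
  by (rule inj_onI) (simp, blast)

lemma card_le_Diff_pairs:
  assumes "\<And>T. T \<in> F \<Longrightarrow> A \<subseteq> S - T \<and> B \<subseteq> T - S \<and> S - T - A \<in> R \<and> T - S - B \<in> Q"
    and "finite R" "finite Q"
  shows "card F \<le> card R * card Q"
proof -
  have "card F \<le> card (R \<times> Q)"
  proof (rule card_inj_on_le)
    show "inj_on (\<lambda>T. (S - T - A, T - S - B)) F"
      using assms(1) by (blast intro: inj_on_subset[OF inj_on_Diff_pair])
  qed (use assms in auto)
  then show ?thesis by (simp add: card_cartesian_product)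
qed

definition separating_nbrs_bound :: "nat \<Rightarrow> nat \<Rightarrow> nat \<Rightarrow> nat" where
  "separating_nbrs_bound n k j =
     (k - 1 choose j) * (n - k - 1 choose j) + (k - 1 choose (j - 1)) * (n - k - 1 choose (j - 1))"

lemma card_separating_johnson_nbrs_le:
  assumes S: "S \<in> johnson_vertices n k" and a: "a \<in> S" and b: "b \<in> {1..n} - S"
  shows "card {T \<in> johnson_nbrs n k j S. a \<in> T \<longleftrightarrow> b \<notin> T} \<le> separating_nbrs_bound n k j"
proof -
  note S' = johnson_verticesD[OF S]
  let ?R = "\<lambda>r. {R. R \<subseteq> S - {a} \<and> card R = r}"
  let ?Q = "\<lambda>r. {Q. Q \<subseteq> {1..n} - S - {b} \<and> card Q = r}"
  have "card ({1..n} - S) = n - k" using S' by (simp add: card_Diff_subset)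
  then have card_Q: "card (?Q r) = (n - k - 1 choose r)" for r
    using b n_subsets[of "{1..n} - S - {b}" r] by simp
  have card_R: "card (?R r) = (k - 1 choose r)" for r
    using S' a n_subsets[of "S - {a}" r] by simp
  have finite_RQ: "finite (?R r)" "finite (?Q r)" for r
    using S' by (auto intro: finite_subset[of _ "Pow S"] finite_subset[of _ "Pow {1..n}"])
  have nbr: "card (S - T) = j" "card (T - S) = j" "finite T" "T \<subseteq> {1..n}"
    if "T \<in> johnson_nbrs n k j S" for T
    using that johnson_adj_card_Diff[OF S, of T j] johnson_verticesD[of T n k]
    by (auto simp: johnson_nbrs_def)
  have keeping: "card {T \<in> johnson_nbrs n k j S. a \<in> T \<and> b \<notin> T} \<le> card (?R j) * card (?Q j)"
  proof (rule card_le_Diff_pairs[where A = "{}" and B = "{}"])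
    fix T assume "T \<in> {T \<in> johnson_nbrs n k j S. a \<in> T \<and> b \<notin> T}"
    with nbr[of T] show "{} \<subseteq> S - T \<and> {} \<subseteq> T - S \<and> S - T - {} \<in> ?R j \<and> T - S - {} \<in> ?Q j"
      by auto
  qed (fact finite_RQ)+
  have exchanging:
    "card {T \<in> johnson_nbrs n k j S. a \<notin> T \<and> b \<in> T} \<le> card (?R (j - 1)) * card (?Q (j - 1))"
  proof (rule card_le_Diff_pairs[where A = "{a}" and B = "{b}"])
    fix T assume "T \<in> {T \<in> johnson_nbrs n k j S. a \<notin> T \<and> b \<in> T}"
    with nbr[of T] a b S'(3)
    show "{a} \<subseteq> S - T \<and> {b} \<subseteq> T - S \<and> S - T - {a} \<in> ?R (j - 1) \<and> T - S - {b} \<in> ?Q (j - 1)"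
      by auto
  qed (fact finite_RQ)+
  have "{T \<in> johnson_nbrs n k j S. a \<in> T \<longleftrightarrow> b \<notin> T}
      = {T \<in> johnson_nbrs n k j S. a \<in> T \<and> b \<notin> T} \<union> {T \<in> johnson_nbrs n k j S. a \<notin> T \<and> b \<in> T}"
    by auto
  then have "card {T \<in> johnson_nbrs n k j S. a \<in> T \<longleftrightarrow> b \<notin> T}
      \<le> card {T \<in> johnson_nbrs n k j S. a \<in> T \<and> b \<notin> T}
        + card {T \<in> johnson_nbrs n k j S. a \<notin> T \<and> b \<in> T}"
    by (simp only: card_Un_le)
  also have "\<dots> \<le> separating_nbrs_bound n k j"
    using keeping exchanging unfolding separating_nbrs_bound_def card_R card_Q by (rule add_mono)
  finally show ?thesis .
qed

lemma binomial_pred_sq_sum_le: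
  assumes j: "0 < j" and jk: "8 * j \<le> 7 * k"
  shows "real ((k - 1 choose j)\<^sup>2 + (k - 1 choose (j - 1))\<^sup>2)
    \<le> (1 - real j / (4 * real k)) * real ((k choose j)\<^sup>2)"
proof -
  have k: "0 < k" "j \<le> k" using j jk by auto
  define B where "B = real (k choose j)"
  have "real k * real (k - 1 choose j) = real (k - j) * B"
    using binomial_absorb_comp[of k j] unfolding B_def by (metis of_nat_mult mult.commute)
  then have x: "real (k - 1 choose j) = (real k - real j) * B / real k"
    using k by (simp add: field_simps of_nat_diff)
  have y: "real (k - 1 choose (j - 1)) = real j * B / real k"
    using binomial_absorption[of "j - 1" k] j k unfolding B_def
    by (simp add: field_simps flip: of_nat_mult)
  have ineq: "(real k - real j)\<^sup>2 + (real j)\<^sup>2 \<le> (real k)\<^sup>2 - real j * real k / 4"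
  proof -
    have "real j * (8 * real j) \<le> real j * (7 * real k)"
      using jk by (intro mult_left_mono) auto
    then show ?thesis by (simp add: power2_eq_square algebra_simps)
  qed
  have "real ((k - 1 choose j)\<^sup>2 + (k - 1 choose (j - 1))\<^sup>2)
      = ((real k - real j)\<^sup>2 + (real j)\<^sup>2) * B\<^sup>2 / (real k)\<^sup>2"
    using k unfolding of_nat_add of_nat_power x y by (simp add: power2_eq_square field_simps)
  also have "\<dots> \<le> ((real k)\<^sup>2 - real j * real k / 4) * B\<^sup>2 / (real k)\<^sup>2"
    using ineq by (intro divide_right_mono mult_right_mono) auto
  also have "\<dots> = (1 - real j / (4 * real k)) * B\<^sup>2"
    using k by (simp add: power2_eq_square field_simps)
  finally show ?thesis unfolding B_def by simp
qed

lemma separating_nbrs_bound_half_le: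
  assumes "0 < j" "8 * j \<le> 7 * k"
  shows "real (separating_nbrs_bound (2 * k) k j)
    \<le> (1 - real j / real (2 * k) / 2) * real ((k choose j)\<^sup>2)"
proof -
  have "2 * k - k - 1 = k - 1" by simp
  then show ?thesis
    using binomial_pred_sq_sum_le[OF assms]
    by (simp add: separating_nbrs_bound_def power2_eq_square mult.assoc)
qed

lemma johnson_eigenfunction_constant:
  fixes f :: "nat set \<Rightarrow> real"
  assumes eq: "\<And>S. S \<in> johnson_vertices n k \<Longrightarrow> sum f (johnson_nbrs n k j S) = lam * f S + c"
    and large: "real (separating_nbrs_bound n k j) < \<bar>lam\<bar>"
    and X: "X \<in> johnson_vertices n k" and Y: "Y \<in> johnson_vertices n k"
  shows "f X = f Y"
proof (rule ccontr)
  let ?V = "johnson_vertices n k"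
  let ?P = "{(X, Y). X \<in> ?V \<and> Y \<in> ?V \<and> exchange X Y}"
  let ?D = "(\<lambda>(X, Y). \<bar>f X - f Y\<bar>) ` ?P"
  assume "f X \<noteq> f Y"
  then obtain X1 Y1 where XY1: "(X1, Y1) \<in> ?P" "f X1 \<noteq> f Y1"
    using johnson_vertices_exchange_connected[of n k f, OF _ X Y] by blast
  have "finite ?P"
    by (rule finite_subset[of _ "?V \<times> ?V"]) (auto simp: finite_johnson_vertices)
  then have finite_D: "finite ?D" by simp
  define M where "M = Max ?D"
  have M: "\<bar>f X - f Y\<bar> \<le> M" if "X \<in> ?V" "Y \<in> ?V" "exchange X Y" for X Y
    unfolding M_def using finite_D that by (intro Max_ge) force+
  have "0 < M" using M[of X1 Y1] XY1 by simp
  have "M \<in> ?D" unfolding M_def using finite_D XY1(1) by (intro Max_in) auto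
  then obtain X0 Y0 where "(X0, Y0) \<in> ?P" and M_eq: "M = \<bar>f X0 - f Y0\<bar>" by auto
  then obtain a b where X0: "X0 \<in> ?V" and Y0: "Y0 \<in> ?V" and a: "a \<in> X0" and b: "b \<notin> X0"
    and Y0_eq: "Y0 = insert b (X0 - {a})"
    unfolding exchange_def by blast
  have "b \<in> {1..n}" using Y0 Y0_eq johnson_verticesD(1)[OF Y0] by auto
  moreover have "a \<in> {1..n}" using a johnson_verticesD(1)[OF X0] by auto
  ultimately have diff: "\<bar>sum f (johnson_nbrs n k j X0) - sum f (johnson_nbrs n k j Y0)\<bar>
      \<le> M * card {T \<in> johnson_nbrs n k j X0. a \<in> T \<longleftrightarrow> b \<notin> T}"
    using sum_johnson_nbrs_transpose_diff_le[of a n b k f M j X0] M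
    by (simp add: Y0_eq transpose_image_insert_Diff[OF a b])
  have "sum f (johnson_nbrs n k j X0) - sum f (johnson_nbrs n k j Y0) = lam * (f X0 - f Y0)"
    using eq[OF X0] eq[OF Y0] by (simp add: algebra_simps)
  then have "\<bar>lam\<bar> * M = \<bar>sum f (johnson_nbrs n k j X0) - sum f (johnson_nbrs n k j Y0)\<bar>"
    by (simp add: M_eq abs_mult)
  also have "\<dots> \<le> M * card {T \<in> johnson_nbrs n k j X0. a \<in> T \<longleftrightarrow> b \<notin> T}"
    by (fact diff)
  also have "\<dots> \<le> M * separating_nbrs_bound n k j"
    using card_separating_johnson_nbrs_le[OF X0 a] \<open>b \<in> {1..n}\<close> b \<open>0 < M\<close> by simp
  finally show False using large \<open>0 < M\<close> by (simp add: mult.commute)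
qed

section \<open>The normalised Laplacian of a Johnson graph\<close>

lemma johnson_adj_mat_carrier:
  "johnson_adj_mat n k j e
    \<in> carrier_mat (card (johnson_vertices n k)) (card (johnson_vertices n k))"
  by (simp add: johnson_adj_mat_def)

lemma transpose_johnson_adj_mat: "transpose_mat (johnson_adj_mat n k j e) = johnson_adj_mat n k j e"
  by (rule eq_matI) (auto simp: johnson_adj_mat_def johnson_adj_commute)

lemma johnson_adj_mat_mult_vec:
  fixes n k :: nat
  defines "N \<equiv> card (johnson_vertices n k)"
  assumes e: "bij_betw e {0..<N} (johnson_vertices n k)"
    and v: "v \<in> carrier_vec N" and i: "i < N"
  shows "(johnson_adj_mat n k j e *\<^sub>v v) $ i
    = (\<Sum>T\<in>johnson_nbrs n k j (e i). v $ inv_into {0..<N} e T)"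
proof -
  let ?f = "\<lambda>T. v $ inv_into {0..<N} e T"
  let ?adj = "\<lambda>T. if johnson_adj j (e i) T then 1 else 0 :: real"
  have f_e: "?f (e l) = v $ l" if "l < N" for l
    using inv_into_f_f[OF bij_betw_imp_inj_on[OF e]] that by simp
  have "(johnson_adj_mat n k j e *\<^sub>v v) $ i = (\<Sum>l\<in>{0..<N}. ?adj (e l) * v $ l)"
    using i v by (simp add: johnson_adj_mat_def N_def mult_mat_vec_def scalar_prod_def row_def)
  also have "\<dots> = (\<Sum>l\<in>{0..<N}. ?adj (e l) * ?f (e l))"
    by (rule sum.cong) (auto simp: f_e)
  also have "\<dots> = (\<Sum>T\<in>johnson_vertices n k. ?adj T * ?f T)"
    by (rule sum.reindex_bij_betw[OF e])
  also have "\<dots> = (\<Sum>T\<in>johnson_vertices n k. if johnson_adj j (e i) T then ?f T else 0)"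
    by (rule sum.cong) auto
  also have "\<dots> = (\<Sum>T\<in>johnson_nbrs n k j (e i). ?f T)"
    unfolding johnson_nbrs_def by (rule sum.inter_filter[OF finite_johnson_vertices, symmetric])
  finally show ?thesis .
qed

definition johnson_laplacian :: "nat \<Rightarrow> nat \<Rightarrow> nat \<Rightarrow> (nat \<Rightarrow> nat set) \<Rightarrow> real \<Rightarrow> real mat" where
  "johnson_laplacian n k j e d =
     1\<^sub>m (card (johnson_vertices n k)) - (1 / d) \<cdot>\<^sub>m johnson_adj_mat n k j e"

lemma johnson_laplacian_carrier:
  "johnson_laplacian n k j e d
    \<in> carrier_mat (card (johnson_vertices n k)) (card (johnson_vertices n k))"
  using johnson_adj_mat_carrier[of n k j e] unfolding johnson_laplacian_def
  by (intro carrier_matI) auto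

lemma transpose_johnson_laplacian:
  "transpose_mat (johnson_laplacian n k j e d) = johnson_laplacian n k j e d"
  unfolding johnson_laplacian_def
  using johnson_adj_mat_carrier transpose_johnson_adj_mat by (rule transpose_one_minus_smult_mat)

lemma johnson_laplacian_affine_eigenvector_const:
  fixes n k :: nat and p :: "real vec"
  defines "N \<equiv> card (johnson_vertices n k)"
  assumes e: "bij_betw e {0..<N} (johnson_vertices n k)" and d: "0 < d"
    and bound: "real (separating_nbrs_bound n k j) \<le> (1 - t) * d"
    and p: "p \<in> carrier_vec N" and mu: "mu < t"
    and eq: "\<forall>i<N. (johnson_laplacian n k j e d *\<^sub>v p) $ i = mu * p $ i + c"
  shows "\<forall>i<N. p $ i = p $ 0"
proof -
  define f where "f T = p $ inv_into {0..<N} e T" for T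
  have f_e: "f (e l) = p $ l" if "l < N" for l
    unfolding f_def using inv_into_f_f[OF bij_betw_imp_inj_on[OF e]] that by simp
  have e_V: "e l \<in> johnson_vertices n k" if "l < N" for l
    using e that by (auto dest: bij_betwE)
  have eigen: "sum f (johnson_nbrs n k j S) = (d * (1 - mu)) * f S + (- d * c)"
    if S: "S \<in> johnson_vertices n k" for S
  proof -
    obtain i where i: "i < N" "S = e i"
      using e S by (metis atLeastLessThan_iff bij_betw_iff_bijections)
    have "p $ i - (1 / d) * (johnson_adj_mat n k j e *\<^sub>v p) $ i = mu * p $ i + c"
      using eq i index_one_minus_smult_mult_vec[OF johnson_adj_mat_carrier p[unfolded N_def]]
      unfolding N_def johnson_laplacian_def by simp
    moreover have "(johnson_adj_mat n k j e *\<^sub>v p) $ i = sum f (johnson_nbrs n k j S)"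
      using johnson_adj_mat_mult_vec[OF e[unfolded N_def] p[unfolded N_def]] i
      unfolding f_def N_def by simp
    ultimately show ?thesis using d f_e[OF i(1)] i(2) by (simp add: field_simps)
  qed
  have "(1 - t) * d < d * (1 - mu)"
    using mult_strict_left_mono[OF mu d] by (simp add: algebra_simps)
  then have large: "real (separating_nbrs_bound n k j) < \<bar>d * (1 - mu)\<bar>"
    using bound abs_ge_self[of "d * (1 - mu)"] by linarith
  show ?thesis
  proof (intro allI impI)
    fix i assume i: "i < N"
    then have "f (e i) = f (e 0)"
      by (intro johnson_eigenfunction_constant[OF eigen large] e_V) auto
    then show "p $ i = p $ 0" using f_e[OF i] f_e[of 0] i by simp
  qed
qed

lemma johnson_laplacian_second_eigenvalue_ge:
  fixes n k :: nat
  defines "N \<equiv> card (johnson_vertices n k)"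
  assumes e: "bij_betw e {0..<N} (johnson_vertices n k)" and d: "0 < d"
    and bound: "real (separating_nbrs_bound n k j) \<le> (1 - t) * d" and N: "2 \<le> N"
    and cp: "char_poly (johnson_laplacian n k j e d) = (\<Prod>a\<leftarrow>es. [:- a, 1:])"
  shows "t \<le> sort es ! 1"
  using johnson_laplacian_carrier N cp
    johnson_laplacian_affine_eigenvector_const[OF e[unfolded N_def] d bound]
  unfolding N_def by (rule second_smallest_eigenvalue_ge)

theorem theorem2:
  fixes n j :: nat and e :: "nat \<Rightarrow> nat set"
  assumes "even n" and "n > 0" and "j > 0"
    and "real j / real n \<le> 1 / 10"
    and "bij_betw e {0..<card (johnson_vertices n (n div 2))} (johnson_vertices n (n div 2))"
  defines "N \<equiv> card (johnson_vertices n (n div 2))"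
    and "d \<equiv> real (((n div 2) choose j) ^ 2)"
  defines "L \<equiv> 1\<^sub>m N - (1 / d) \<cdot>\<^sub>m johnson_adj_mat n (n div 2) j e"
  shows "(\<exists>es. eigenvalue_list L es) \<and>
         (\<forall>es. eigenvalue_list L es \<longrightarrow> sort es ! 1 \<ge> (real j / real n) / 2)"
proof -
  define k where "k = n div 2"
  have n: "n = 2 * k" using assms(1) by (simp add: k_def)
  have "real j * 10 \<le> real n" using assms(2,4) by (simp add: field_simps)
  then have jk: "8 * j \<le> 7 * k" "j \<le> k" "0 < k" using n assms(3) by linarith+
  have L_eq: "L = johnson_laplacian n k j e d"
    by (simp add: L_def N_def k_def johnson_laplacian_def)
  have e: "bij_betw e {0..<card (johnson_vertices n k)} (johnson_vertices n k)"
    using assms(5) by (simp add: k_def)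
  have N: "2 \<le> card (johnson_vertices n k)"
    using upper_le_binomial[of k n] jk n by (simp add: card_johnson_vertices)
  have d: "0 < d" using jk by (simp add: d_def k_def[symmetric])
  have bound: "real (separating_nbrs_bound n k j) \<le> (1 - real j / real n / 2) * d"
    using separating_nbrs_bound_half_le[OF assms(3) jk(1)] by (simp add: n d_def)
  show ?thesis
    unfolding eigenvalue_list_def L_eq
    using char_poly_real_symmetric_mat_splits[OF johnson_laplacian_carrier
        transpose_johnson_laplacian]
      johnson_laplacian_second_eigenvalue_ge[OF e d bound N]
    by blast
qed

end
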